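(* Let $M=\begin{bmatrix} A & B\\ 0 & C\end{bmatrix}$ be an ACI-matrix over a field $\mathbb{F}$ whose lower-left zero block is Big or Medium. Then the following are equivalent: (i) $A$ is FRmR and $C$ is FCmR; (ii) $\mathrm{maxRank}(M)=\mathrm{rows}(A)+\mathrm{cols}(C)$.
   Context: Let $\mathbb{F}$ be a field. An ACI-matrix is a matrix with entries in $\mathbb{F}[x_1,\dots,x_k]$ whose entries are polynomials of degree at most one and such that no indeterminate appears in two different columns. A completion is an assignment of values in $\mathbb{F}$ to all indeterminates; $\mathrm{maxRank}(M)$ is the maximum rank of a completion. $\mathrm{rows}(\cdot)$, $\mathrm{cols}(\cdot)$ denote numbers of rows and columns. Matrices of size $0\times q$ (wide degenerate), $p\times 0$ (tall degenerate) and $0\times 0$ (void) are ACI-matrices and blocks may be degenerate. An ACI-matrix $N$ is FRmR if $\mathrm{maxRank}(N)=\mathrm{rows}(N)$ and FCmR if $\mathrm{maxRank}(N)=\mathrm{cols}(N)$; by convention tall degenerate ones are FRmR, wide degenerate ones are FCmR, and the void one is both. For an $m\times n$ block matrix $\begin{bmatrix} A & B\\ 0 & C\end{bmatrix}$ whose lower-left block $0$ is $r\times s$, the zero block is Big if $r+s>\max\{m,n\}$ and Medium if $r+s=\max\{m,n\}$. *)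

theory Defs
  imports "Jordan_Normal_Form.DL_Rank"
begin

text \<open>An entry of an ACI-matrix is a polynomial of degree at most one in the
  indeterminates of type 'v (a finite type: x_1,...,x_k), represented by its constant
  term and its coefficient vector: (c, l) stands for c + sum_v l v * x_v.\<close>

type_synonym ('a, 'v) aff = "'a \<times> ('v \<Rightarrow> 'a)"

definition aff_eval :: "('a::field, 'v::finite) aff \<Rightarrow> ('v \<Rightarrow> 'a) \<Rightarrow> 'a" where
  "aff_eval e x = fst e + (\<Sum>v\<in>UNIV. snd e v * x v)"

definition aff_zero :: "('a::field, 'v) aff" where
  "aff_zero = (0, \<lambda>_. 0)"

text \<open>Indeterminate v appears in entry (i,j) iff its coefficient there is nonzero.
  ACI: no indeterminate appears in two different columns.\<close>
definition is_ACI :: "('a::field, 'v::finite) aff mat \<Rightarrow> bool" where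
  "is_ACI M = (\<forall>i1 j1 i2 j2 v. i1 < dim_row M \<and> i2 < dim_row M \<and> j1 < dim_col M \<and> j2 < dim_col M
      \<and> snd (M $$ (i1, j1)) v \<noteq> 0 \<and> snd (M $$ (i2, j2)) v \<noteq> 0 \<longrightarrow> j1 = j2)"

definition completion :: "('a::field, 'v::finite) aff mat \<Rightarrow> ('v \<Rightarrow> 'a) \<Rightarrow> 'a mat" where
  "completion M x = map_mat (\<lambda>e. aff_eval e x) M"

definition maxRank :: "('a::field, 'v::finite) aff mat \<Rightarrow> nat" where
  "maxRank M = Max {vec_space.rank (dim_row M) (completion M x) | x. True}"

text \<open>Conventions: tall degenerate (p x 0) matrices are FRmR, wide degenerate (0 x q)
  ones are FCmR, the void one is both.\<close>
definition FRmR :: "('a::field, 'v::finite) aff mat \<Rightarrow> bool" where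
  "FRmR N = (maxRank N = dim_row N \<or> dim_col N = 0)"

definition FCmR :: "('a::field, 'v::finite) aff mat \<Rightarrow> bool" where
  "FCmR N = (maxRank N = dim_col N \<or> dim_row N = 0)"

end

theory Submission
  imports Defs "Jordan_Normal_Form.Matrix_Kernel"
begin

text \<open>Let A be p x s and C be r x q. For every completion, the zero block gives
  rank [A B; 0 C] \<le> rank A + q (the first s columns only see A) and
  rank [A B; 0 C] \<le> p + rank C (modulo the first p coordinates only C remains). Hence
  maxRank M \<le> p + q, and a completion attaining p + q has rank A = p and rank C = q.
  Conversely, if rank A = p then the columns of A span all of F^p, so the unit vectors of F^p
  padded by zeros together with the padded columns of C lie in the column span of M, giving
  rank [A B; 0 C] = p + rank C. Since A and C share no indeterminate, a full-rank completion
  of A and one of C combine into a single completion of M.\<close>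

lemma (in vectorspace) li_card_le_card_span:
  assumes "finite T" "finite W" "W \<subseteq> carrier V" "lin_indpt T" "T \<subseteq> span W"
  shows "card T \<le> card W"
  using replacement[OF assms(1,2) _ assms(4,5)] assms(3) by fastforce

context vec_space
begin

lemma cols_basis_exists:
  assumes X: "X \<in> carrier_mat n nc"
  obtains S where "S \<subseteq> set (cols X)" "lin_indpt S" "card S = rank X" "set (cols X) \<subseteq> span S"
proof -
  let ?P = "\<lambda>T. T \<subseteq> set (cols X) \<and> lin_indpt T"
  have "lin_indpt {}" by (rule finite_lin_indpt2) auto
  then obtain S where S: "maximal S ?P"
    using maximal_exists_superset[of "set (cols X)" ?P "{}"] by auto
  have sub: "S \<subseteq> set (cols X)" and li: "lin_indpt S" using S unfolding maximal_def by auto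
  have cX: "set (cols X) \<subseteq> carrier_vec n" using X cols_dim by blast
  have span: "v \<in> span S" if v: "v \<in> set (cols X)" for v
  proof (cases "v \<in> S")
    case True
    then show ?thesis using in_own_span sub cX by blast
  next
    case False
    then have "\<not> lin_indpt (S \<union> {v})"
      using S v sub unfolding maximal_def by blast
    then show ?thesis using lin_dep_iff_in_span[of S v] sub cX li v False by auto
  qed
  show thesis
    by (rule that[OF sub li rank_card_indpt[OF X S, symmetric]]) (use span in blast)
qed

lemma rank_le_card_span:
  assumes X: "X \<in> carrier_mat n nc" and "finite W" "W \<subseteq> carrier_vec n"
    and "set (cols X) \<subseteq> span W"
  shows "rank X \<le> card W"
proof -
  obtain S where "S \<subseteq> set (cols X)" "lin_indpt S" "card S = rank X"
    using cols_basis_exists[OF X] .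
  then show ?thesis
    using li_card_le_card_span[of S W] assms finite_subset[of S "set (cols X)"] by auto
qed

lemma li_card_le_rank:
  assumes X: "X \<in> carrier_mat n nc" and "finite T" "lin_indpt T" "T \<subseteq> span (set (cols X))"
  shows "card T \<le> rank X"
proof -
  obtain S where S: "S \<subseteq> set (cols X)" "lin_indpt S" "card S = rank X" "set (cols X) \<subseteq> span S"
    using cols_basis_exists[OF X] .
  have cX: "set (cols X) \<subseteq> carrier_vec n" using X cols_dim by blast
  have "span (set (cols X)) \<subseteq> span S" using span_subsetI S cX by auto
  then show ?thesis
    using li_card_le_card_span[of T S] S assms cX finite_subset[of S "set (cols X)"] by auto
qed

lemma card_set_unit_vecs: "card (set (unit_vecs n) :: 'a vec set) = n"
  using distinct_card[OF unit_vecs_distinct] by simp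

lemma rank_le_nr:
  assumes "X \<in> carrier_mat n nc"
  shows "rank X \<le> n"
proof -
  have "set (cols X) \<subseteq> carrier_vec n" using assms cols_dim by blast
  then have "rank X \<le> card (set (unit_vecs n) :: 'a vec set)"
    by (intro rank_le_card_span[OF assms]) (auto simp: unit_vecs_carrier span_unit_vecs_is_carrier)
  then show ?thesis by (simp add: card_set_unit_vecs)
qed

lemma full_row_rank_span_cols:
  assumes X: "X \<in> carrier_mat n nc" and "rank X = n"
  shows "span (set (cols X)) = carrier_vec n"
proof -
  obtain S where S: "S \<subseteq> set (cols X)" "lin_indpt S" "card S = rank X"
    using cols_basis_exists[OF X] .
  have cX: "set (cols X) \<subseteq> carrier_vec n" using X cols_dim by blast
  have "basis S"
    using dim_li_is_basis[of S] S cX assms(2) dim_is_n finite_subset[of S "set (cols X)"] by auto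
  then have "carrier_vec n \<subseteq> span (set (cols X))"
    using span_is_monotone[OF S(1)] unfolding basis_def by auto
  then show ?thesis using span_closed cX by auto
qed

end

context vardim
begin

lemma padr_in_span_padr:
  assumes "U \<subseteq> carrier_vec n" "v \<in> span n U"
  shows "padr m v \<in> span (n + m) (padr m ` U)"
  using span_pad(1)[OF assms(1), of m] assms(2) by blast

lemma padl_in_span_padl:
  assumes "U \<subseteq> carrier_vec n" "v \<in> span n U"
  shows "padl m v \<in> span (m + n) (padl m ` U)"
  using span_pad(2)[OF assms(1), of m] assms(2) by (subst add.commute) blast

end

lemma append_vec_eq_padr_add_padl:
  fixes b :: "'a::monoid_add vec"
  assumes "b \<in> carrier_vec p" "c \<in> carrier_vec r"
  shows "b @\<^sub>v c = (b @\<^sub>v 0\<^sub>v r) + (0\<^sub>v p @\<^sub>v c)"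
  by (rule eq_vecI) (use assms in auto)

lemma padl_eq_append_vec_minus_padr:
  fixes b :: "'a::ring_1 vec"
  assumes "b \<in> carrier_vec p" "c \<in> carrier_vec r"
  shows "0\<^sub>v p @\<^sub>v c = (b @\<^sub>v c) + (-1) \<cdot>\<^sub>v (b @\<^sub>v 0\<^sub>v r)"
  by (rule eq_vecI) (use assms in auto)

lemma set_cols_four_block_mat_zero:
  assumes A: "A \<in> carrier_mat p s" and B: "B \<in> carrier_mat p q" and C: "C \<in> carrier_mat r q"
  shows "set (cols (four_block_mat A B (0\<^sub>m r s) C)) =
     (\<lambda>j. col A j @\<^sub>v 0\<^sub>v r) ` {..<s} \<union> (\<lambda>j. col B j @\<^sub>v col C j) ` {..<q}"
proof -
  let ?M = "four_block_mat A B (0\<^sub>m r s) C"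
  have left: "col ?M j = col A j @\<^sub>v 0\<^sub>v r" if "j < s" for j
    by (rule eq_vecI) (use A B C that in auto)
  have right: "col ?M (s + j) = col B j @\<^sub>v col C j" if "j < q" for j
    by (rule eq_vecI) (use A B C that in auto)
  have "(\<lambda>j. s + j) ` {..<q} = {s..<s + q}"
    using image_add_atLeastLessThan[of s 0 q] by (simp add: add.commute lessThan_atLeast0)
  then have split: "{..<s + q} = {..<s} \<union> (\<lambda>j. s + j) ` {..<q}"
    by (auto simp: lessThan_atLeast0)
  have "set (cols ?M) = col ?M ` {..<s + q}"
    using A C by (simp add: cols_def lessThan_atLeast0)
  also have "\<dots> = col ?M ` {..<s} \<union> (\<lambda>j. col ?M (s + j)) ` {..<q}"
    unfolding split by (simp only: image_Un image_image)
  also have "col ?M ` {..<s} = (\<lambda>j. col A j @\<^sub>v 0\<^sub>v r) ` {..<s}"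
    by (rule image_cong) (simp_all add: left)
  also have "(\<lambda>j. col ?M (s + j)) ` {..<q} = (\<lambda>j. col B j @\<^sub>v col C j) ` {..<q}"
    by (rule image_cong) (simp_all add: right)
  finally show ?thesis .
qed

lemma rank_four_block_mat_zero_le_left:
  fixes A :: "'a::field mat"
  assumes A: "A \<in> carrier_mat p s" and B: "B \<in> carrier_mat p q" and C: "C \<in> carrier_mat r q"
  shows "vec_space.rank (p + r) (four_block_mat A B (0\<^sub>m r s) C) \<le> vec_space.rank p A + q"
proof -
  interpret PA: vec_space "TYPE('a)" p .
  interpret PM: vec_space "TYPE('a)" "p + r" .
  interpret VD: vardim "TYPE('a)" .
  let ?M = "four_block_mat A B (0\<^sub>m r s) C"
  obtain S where S: "S \<subseteq> set (cols A)" "PA.lin_indpt S" "card S = PA.rank A"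
    "set (cols A) \<subseteq> PA.span S"
    using PA.cols_basis_exists[OF A] .
  have SA: "S \<subseteq> carrier_vec p" using S(1) A cols_dim by blast
  have finS: "finite S" using S(1) by (rule finite_subset) simp
  define W where "W = (\<lambda>v. v @\<^sub>v 0\<^sub>v r) ` S \<union> (\<lambda>j. col B j @\<^sub>v col C j) ` {..<q}"
  have finW: "finite W" using finS by (simp add: W_def)
  have Wc: "W \<subseteq> carrier_vec (p + r)" unfolding W_def using SA B C by auto
  have "card W \<le> card ((\<lambda>v. v @\<^sub>v 0\<^sub>v r) ` S) + card ((\<lambda>j. col B j @\<^sub>v col C j) ` {..<q})"
    unfolding W_def by (rule card_Un_le)
  also have "\<dots> \<le> PA.rank A + q"
    using S(3) card_image_le[OF finS] card_image_le[of "{..<q}"] by (intro add_mono) auto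
  finally have card: "card W \<le> PA.rank A + q" .
  have "col A j @\<^sub>v 0\<^sub>v r \<in> PM.span W" if "j < s" for j
  proof -
    have "col A j \<in> PA.span S" using S(4) that A by (auto simp: cols_def)
    then have "col A j @\<^sub>v 0\<^sub>v r \<in> PM.span ((\<lambda>v. v @\<^sub>v 0\<^sub>v r) ` S)"
      using VD.padr_in_span_padr[OF SA] by blast
    then show ?thesis using PM.span_is_monotone[of _ W] unfolding W_def by blast
  qed
  moreover have "col B j @\<^sub>v col C j \<in> PM.span W" if "j < q" for j
    using PM.in_own_span[OF Wc] that unfolding W_def by blast
  ultimately have "set (cols ?M) \<subseteq> PM.span W"
    using set_cols_four_block_mat_zero[OF A B C] by auto
  then show ?thesis using PM.rank_le_card_span[of ?M "s + q", OF _ finW Wc] card A B C by fastforce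
qed

lemma rank_four_block_mat_zero_le_right:
  fixes A :: "'a::field mat"
  assumes A: "A \<in> carrier_mat p s" and B: "B \<in> carrier_mat p q" and C: "C \<in> carrier_mat r q"
  shows "vec_space.rank (p + r) (four_block_mat A B (0\<^sub>m r s) C) \<le> p + vec_space.rank r C"
proof -
  interpret PA: vec_space "TYPE('a)" p .
  interpret PC: vec_space "TYPE('a)" r .
  interpret PM: vec_space "TYPE('a)" "p + r" .
  interpret VD: vardim "TYPE('a)" .
  let ?M = "four_block_mat A B (0\<^sub>m r s) C"
  let ?U = "set (unit_vecs p) :: 'a vec set"
  obtain S where S: "S \<subseteq> set (cols C)" "PC.lin_indpt S" "card S = PC.rank C"
    "set (cols C) \<subseteq> PC.span S"
    using PC.cols_basis_exists[OF C] .
  have SC: "S \<subseteq> carrier_vec r" using S(1) C cols_dim by blast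
  have finS: "finite S" using S(1) by (rule finite_subset) simp
  have U: "?U \<subseteq> carrier_vec p" by (rule unit_vecs_carrier)
  define W where "W = (\<lambda>v. v @\<^sub>v 0\<^sub>v r) ` ?U \<union> (\<lambda>v. 0\<^sub>v p @\<^sub>v v) ` S"
  have finW: "finite W" using finS by (simp add: W_def)
  have Wc: "W \<subseteq> carrier_vec (p + r)" unfolding W_def using SC U by auto
  have "card W \<le> card ((\<lambda>v. v @\<^sub>v 0\<^sub>v r) ` ?U) + card ((\<lambda>v. 0\<^sub>v p @\<^sub>v v) ` S)"
    unfolding W_def by (rule card_Un_le)
  also have "\<dots> \<le> p + PC.rank C"
  proof (rule add_mono)
    show "card ((\<lambda>v. v @\<^sub>v 0\<^sub>v r) ` ?U) \<le> p"
      using card_image_le[of ?U "\<lambda>v. v @\<^sub>v 0\<^sub>v r"] PA.card_set_unit_vecs by simp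
    show "card ((\<lambda>v. 0\<^sub>v p @\<^sub>v v) ` S) \<le> PC.rank C"
      using card_image_le[OF finS, of "\<lambda>v. 0\<^sub>v p @\<^sub>v v"] S(3) by simp
  qed
  finally have card: "card W \<le> p + PC.rank C" .
  have padr: "v @\<^sub>v 0\<^sub>v r \<in> PM.span W" if "v \<in> carrier_vec p" for v
  proof -
    have "v @\<^sub>v 0\<^sub>v r \<in> PM.span ((\<lambda>v. v @\<^sub>v 0\<^sub>v r) ` ?U)"
      using VD.padr_in_span_padr[OF U] that PA.span_unit_vecs_is_carrier by blast
    then show ?thesis using PM.span_is_monotone[of _ W] unfolding W_def by blast
  qed
  have padl: "0\<^sub>v p @\<^sub>v v \<in> PM.span W" if "v \<in> set (cols C)" for v
  proof -
    have "0\<^sub>v p @\<^sub>v v \<in> PM.span ((\<lambda>v. 0\<^sub>v p @\<^sub>v v) ` S)"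
      using VD.padl_in_span_padl[OF SC] that S(4) by blast
    then show ?thesis using PM.span_is_monotone[of _ W] unfolding W_def by blast
  qed
  have "col A j @\<^sub>v 0\<^sub>v r \<in> PM.span W" if "j < s" for j
    using padr A that by simp
  moreover have "col B j @\<^sub>v col C j \<in> PM.span W" if "j < q" for j
  proof -
    have "col B j \<in> carrier_vec p" "col C j \<in> set (cols C)"
      using that B C by (simp_all add: cols_def)
    then have "(col B j @\<^sub>v 0\<^sub>v r) + (0\<^sub>v p @\<^sub>v col C j) \<in> PM.span W"
      by (intro PM.span_add1[OF Wc] padr padl)
    then show ?thesis
      using append_vec_eq_padr_add_padl[of "col B j" p "col C j" r] B C that by simp
  qed
  ultimately have "set (cols ?M) \<subseteq> PM.span W"
    using set_cols_four_block_mat_zero[OF A B C] by auto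
  then show ?thesis using PM.rank_le_card_span[of ?M "s + q", OF _ finW Wc] card A B C by fastforce
qed

lemma rank_four_block_mat_zero_full_row_rank:
  fixes A :: "'a::field mat"
  assumes A: "A \<in> carrier_mat p s" and B: "B \<in> carrier_mat p q" and C: "C \<in> carrier_mat r q"
    and rank_A: "vec_space.rank p A = p"
  shows "vec_space.rank (p + r) (four_block_mat A B (0\<^sub>m r s) C) = p + vec_space.rank r C"
proof -
  interpret PA: vec_space "TYPE('a)" p .
  interpret PC: vec_space "TYPE('a)" r .
  interpret PM: vec_space "TYPE('a)" "p + r" .
  interpret VD: vardim "TYPE('a)" .
  let ?M = "four_block_mat A B (0\<^sub>m r s) C"
  let ?U = "set (unit_vecs p) :: 'a vec set"
  let ?V = "set (cols ?M)"
  obtain S where S: "S \<subseteq> set (cols C)" "PC.lin_indpt S" "card S = PC.rank C"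
    using PC.cols_basis_exists[OF C] .
  have SC: "S \<subseteq> carrier_vec r" using S(1) C cols_dim by blast
  have finS: "finite S" using S(1) by (rule finite_subset) simp
  have U: "?U \<subseteq> carrier_vec p" by (rule unit_vecs_carrier)
  have liU: "PA.lin_indpt ?U" using PA.unit_vecs_basis unfolding PA.basis_def by blast
  have Vc: "?V \<subseteq> carrier_vec (p + r)" using cols_dim[of ?M] A C by simp
  define T where "T = (\<lambda>v. v @\<^sub>v 0\<^sub>v r) ` ?U \<union> (\<lambda>v. 0\<^sub>v p @\<^sub>v v) ` S"
  have liT: "PM.lin_indpt T"
    using VD.padr_padl_lindep[OF U liU SC S(2)] unfolding T_def .
  have "0\<^sub>v p \<notin> ?U" using PA.vs_zero_lin_dep[OF U liU] by simp
  then have "card T = card ((\<lambda>v. v @\<^sub>v 0\<^sub>v r) ` ?U) + card ((\<lambda>v. 0\<^sub>v p @\<^sub>v v) ` S)"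
    unfolding T_def using VD.pad_disjoint[OF U _ SC] finS by (intro card_Un_disjoint) auto
  also have "\<dots> = p + PC.rank C"
    using card_image[OF inj_on_subset[OF VD.padr_inj U]] card_image[OF inj_on_subset[OF VD.padl_inj SC]]
      PA.card_set_unit_vecs S(3) by simp
  finally have card: "card T = p + PC.rank C" .
  have padr: "v @\<^sub>v 0\<^sub>v r \<in> PM.span ?V" if "v \<in> carrier_vec p" for v
  proof -
    have "v \<in> PA.span (set (cols A))"
      using PA.full_row_rank_span_cols[OF A rank_A] that by simp
    then have "v @\<^sub>v 0\<^sub>v r \<in> PM.span ((\<lambda>v. v @\<^sub>v 0\<^sub>v r) ` set (cols A))"
      using VD.padr_in_span_padr[of "set (cols A)" p] A cols_dim by blast
    moreover have "(\<lambda>v. v @\<^sub>v 0\<^sub>v r) ` set (cols A) \<subseteq> ?V"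
      using set_cols_four_block_mat_zero[OF A B C] A by (auto simp: cols_def)
    ultimately show ?thesis using PM.span_is_monotone by blast
  qed
  have padl: "0\<^sub>v p @\<^sub>v col C j \<in> PM.span ?V" if "j < q" for j
  proof -
    have "col B j @\<^sub>v 0\<^sub>v r \<in> PM.span ?V"
      using padr B that by simp
    then have "(-1) \<cdot>\<^sub>v (col B j @\<^sub>v 0\<^sub>v r) \<in> PM.span ?V"
      by (rule PM.smult_in_span[OF Vc])
    moreover have "col B j @\<^sub>v col C j \<in> PM.span ?V"
      using PM.in_own_span[OF Vc] set_cols_four_block_mat_zero[OF A B C] that by blast
    ultimately show ?thesis
      using PM.span_add1[OF Vc] padl_eq_append_vec_minus_padr[of "col B j" p "col C j" r] B C that
      by simp
  qed
  have "T \<subseteq> PM.span ?V"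
    unfolding T_def using padr U padl S(1) C by (auto simp: cols_def)
  then have "p + PC.rank C \<le> PM.rank ?M"
    using PM.li_card_le_rank[of ?M "s + q" T] liT card finS A B C unfolding T_def by auto
  then show ?thesis using rank_four_block_mat_zero_le_right[OF A B C] by simp
qed

definition indets :: "('a::field, 'v::finite) aff mat \<Rightarrow> 'v set" where
  "indets X = {v. \<exists>i < dim_row X. \<exists>j < dim_col X. snd (X $$ (i, j)) v \<noteq> 0}"

lemma completion_carrier_mat: "X \<in> carrier_mat n m \<Longrightarrow> completion X x \<in> carrier_mat n m"
  unfolding completion_def by auto

lemma completion_cong:
  assumes "\<And>v. v \<in> indets X \<Longrightarrow> x v = y v"
  shows "completion X x = completion X y"
proof -
  have same: "snd (X $$ (i, j)) v * x v = snd (X $$ (i, j)) v * y v"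
    if "i < dim_row X" "j < dim_col X" for i j v
    using assms[of v] that unfolding indets_def by (cases "snd (X $$ (i, j)) v = 0") auto
  have "aff_eval (X $$ (i, j)) x = aff_eval (X $$ (i, j)) y"
    if "i < dim_row X" "j < dim_col X" for i j
    unfolding aff_eval_def by (simp only: same[OF that])
  then show ?thesis unfolding completion_def by (intro eq_matI) auto
qed

lemma completion_four_block_mat_zero:
  fixes A B C :: "('a::field, 'v::finite) aff mat"
  assumes A: "A \<in> carrier_mat p s" and B: "B \<in> carrier_mat p q" and C: "C \<in> carrier_mat r q"
  shows "completion (four_block_mat A B (mat r s (\<lambda>_. aff_zero)) C) x
     = four_block_mat (completion A x) (completion B x) (0\<^sub>m r s) (completion C x)"
proof -
  have "map_mat (\<lambda>e. aff_eval e x) (mat r s (\<lambda>_. aff_zero)) = (0\<^sub>m r s :: 'a mat)"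
    by (rule eq_matI) (auto simp: aff_eval_def aff_zero_def)
  then show ?thesis
    unfolding completion_def by (simp add: map_four_block_mat[OF A B _ C])
qed

lemma is_ACID:
  assumes "is_ACI M" "i1 < dim_row M" "i2 < dim_row M" "j1 < dim_col M" "j2 < dim_col M"
    "snd (M $$ (i1, j1)) v \<noteq> 0" "snd (M $$ (i2, j2)) v \<noteq> 0"
  shows "j1 = j2"
  using assms unfolding is_ACI_def by blast

lemma indets_four_block_mat_disjoint:
  fixes A B C :: "('a::field, 'v::finite) aff mat"
  assumes A: "A \<in> carrier_mat p s" and B: "B \<in> carrier_mat p q" and C: "C \<in> carrier_mat r q"
    and ACI: "is_ACI (four_block_mat A B (mat r s (\<lambda>_. aff_zero)) C)"
  shows "indets A \<inter> indets C = {}"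
proof (rule equals0I)
  let ?M = "four_block_mat A B (mat r s (\<lambda>_. aff_zero)) C"
  fix v assume "v \<in> indets A \<inter> indets C"
  then obtain i j i' j' where ij: "i < p" "j < s" "snd (A $$ (i, j)) v \<noteq> 0"
    and ij': "i' < r" "j' < q" "snd (C $$ (i', j')) v \<noteq> 0"
    using A C unfolding indets_def by auto
  have "?M $$ (i, j) = A $$ (i, j)" "?M $$ (p + i', s + j') = C $$ (i', j')"
    using ij ij' A B C by auto
  then have "j = s + j'"
    using is_ACID[OF ACI, of i "p + i'" j "s + j'" v] ij ij' A B C by simp
  then show False using ij by simp
qed

lemma finite_completion_ranks:
  "finite {vec_space.rank (dim_row X) (completion X x) | x. True}"
  by (rule finite_subset[of _ "{..dim_row X}"])
    (auto intro: vec_space.rank_le_nr[OF completion_carrier_mat[OF carrier_mat_triv]])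

lemma rank_completion_le_maxRank:
  "vec_space.rank (dim_row X) (completion X x) \<le> maxRank X"
  unfolding maxRank_def by (rule Max_ge[OF finite_completion_ranks]) auto

lemma maxRank_attained:
  obtains x where "vec_space.rank (dim_row X) (completion X x) = maxRank X"
proof -
  have "maxRank X \<in> {vec_space.rank (dim_row X) (completion X x) | x. True}"
    unfolding maxRank_def by (rule Max_in[OF finite_completion_ranks]) auto
  then show thesis using that by auto
qed

lemma maxRank_le_dim_row: "maxRank X \<le> dim_row X"
  by (metis maxRank_attained vec_space.rank_le_nr[OF completion_carrier_mat[OF carrier_mat_triv]])

lemma maxRank_le_dim_col: "maxRank X \<le> dim_col X"
  by (metis maxRank_attained vec_space.rank_le_nc[OF completion_carrier_mat[OF carrier_mat_triv]])

lemma rank_completion_four_block_mat_zero: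
  fixes A B C :: "('a::field, 'v::finite) aff mat"
  assumes A: "A \<in> carrier_mat p s" and B: "B \<in> carrier_mat p q" and C: "C \<in> carrier_mat r q"
  defines "M \<equiv> four_block_mat A B (mat r s (\<lambda>_. aff_zero)) C"
  shows "vec_space.rank (dim_row M) (completion M x) = vec_space.rank (p + r)
    (four_block_mat (completion A x) (completion B x) (0\<^sub>m r s) (completion C x))"
  using completion_four_block_mat_zero[OF A B C] A C unfolding M_def by simp

lemma maxRank_four_block_mat_zero_le:
  fixes A B C :: "('a::field, 'v::finite) aff mat"
  assumes A: "A \<in> carrier_mat p s" and B: "B \<in> carrier_mat p q" and C: "C \<in> carrier_mat r q"
  shows "maxRank (four_block_mat A B (mat r s (\<lambda>_. aff_zero)) C) \<le> p + q"
proof -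
  obtain x where x: "vec_space.rank (p + r)
      (four_block_mat (completion A x) (completion B x) (0\<^sub>m r s) (completion C x))
    = maxRank (four_block_mat A B (mat r s (\<lambda>_. aff_zero)) C)"
    using maxRank_attained rank_completion_four_block_mat_zero[OF A B C] by metis
  have cC: "completion C x \<in> carrier_mat r q" using completion_carrier_mat[OF C] .
  show ?thesis
    using rank_four_block_mat_zero_le_right[OF completion_carrier_mat[OF A, of x]
        completion_carrier_mat[OF B, of x] cC] vec_space.rank_le_nc[OF cC] x
    by linarith
qed

lemma maxRank_blocks_if_maxRank_four_block_mat_zero:
  fixes A B C :: "('a::field, 'v::finite) aff mat"
  assumes A: "A \<in> carrier_mat p s" and B: "B \<in> carrier_mat p q" and C: "C \<in> carrier_mat r q"
    and full: "maxRank (four_block_mat A B (mat r s (\<lambda>_. aff_zero)) C) = p + q"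
  shows "maxRank A = p" and "maxRank C = q"
proof -
  obtain x where x: "vec_space.rank (p + r)
      (four_block_mat (completion A x) (completion B x) (0\<^sub>m r s) (completion C x)) = p + q"
    using maxRank_attained rank_completion_four_block_mat_zero[OF A B C] full by metis
  note blocks = completion_carrier_mat[OF A, of x] completion_carrier_mat[OF B, of x]
    completion_carrier_mat[OF C, of x]
  have "p \<le> vec_space.rank p (completion A x)"
    using rank_four_block_mat_zero_le_left[OF blocks] x by simp
  then show "maxRank A = p"
    using rank_completion_le_maxRank[of A x] maxRank_le_dim_row[of A] A by simp
  have "q \<le> vec_space.rank r (completion C x)"
    using rank_four_block_mat_zero_le_right[OF blocks] x by simp
  then show "maxRank C = q"
    using rank_completion_le_maxRank[of C x] maxRank_le_dim_col[of C] C by simp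
qed

lemma maxRank_four_block_mat_zero_if_maxRank_blocks:
  fixes A B C :: "('a::field, 'v::finite) aff mat"
  assumes A: "A \<in> carrier_mat p s" and B: "B \<in> carrier_mat p q" and C: "C \<in> carrier_mat r q"
    and ACI: "is_ACI (four_block_mat A B (mat r s (\<lambda>_. aff_zero)) C)"
    and full_A: "maxRank A = p" and full_C: "maxRank C = q"
  shows "maxRank (four_block_mat A B (mat r s (\<lambda>_. aff_zero)) C) = p + q"
proof -
  let ?M = "four_block_mat A B (mat r s (\<lambda>_. aff_zero)) C"
  obtain xA where "vec_space.rank (dim_row A) (completion A xA) = maxRank A"
    by (rule maxRank_attained)
  then have xA: "vec_space.rank p (completion A xA) = p" using full_A A by simp
  obtain xC where "vec_space.rank (dim_row C) (completion C xC) = maxRank C"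
    by (rule maxRank_attained)
  then have xC: "vec_space.rank r (completion C xC) = q" using full_C C by simp
  define x where "x v = (if v \<in> indets A then xA v else xC v)" for v
  have "completion A x = completion A xA"
    by (rule completion_cong) (simp add: x_def)
  moreover have "completion C x = completion C xC"
    using indets_four_block_mat_disjoint[OF A B C ACI]
    by (intro completion_cong) (auto simp: x_def)
  ultimately have "vec_space.rank (dim_row ?M) (completion ?M x) = p + q"
    using rank_four_block_mat_zero_full_row_rank[OF completion_carrier_mat[OF A, of x]
        completion_carrier_mat[OF B, of x] completion_carrier_mat[OF C, of x]]
      rank_completion_four_block_mat_zero[OF A B C] xA xC
    by simp
  then show ?thesis
    using rank_completion_le_maxRank[of ?M x] maxRank_four_block_mat_zero_le[OF A B C] by simp
qed

theorem theorem2p4: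
  fixes A B C :: "('a::field, 'v::finite) aff mat"
    and M :: "('a, 'v) aff mat"
    and m n r s :: nat
  assumes "A \<in> carrier_mat (m - r) s"
    and "B \<in> carrier_mat (m - r) (n - s)"
    and "C \<in> carrier_mat r (n - s)"
    and "r \<le> m" and "s \<le> n"
    and "M = four_block_mat A B (mat r s (\<lambda>_. aff_zero)) C"
    and "is_ACI M"
    and "r + s \<ge> max m n"
  shows "(FRmR A \<and> FCmR C) \<longleftrightarrow> maxRank M = dim_row A + dim_col C"
proof -
  note A = assms(1) and B = assms(2) and C = assms(3)
  \<comment> \<open>The Big/Medium hypothesis only serves to reconcile the degenerate conventions:
    it makes A no taller than wide and C no wider than tall.\<close>
  have "m - r \<le> s" "n - s \<le> r" using assms(4,5,8) by auto
  then have "FRmR A \<longleftrightarrow> maxRank A = m - r" and "FCmR C \<longleftrightarrow> maxRank C = n - s"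
    using maxRank_le_dim_row[of A] maxRank_le_dim_col[of C] A C
    unfolding FRmR_def FCmR_def by auto
  then show ?thesis
    using maxRank_blocks_if_maxRank_four_block_mat_zero[OF A B C]
      maxRank_four_block_mat_zero_if_maxRank_blocks[OF A B C] assms(6,7) A C
    by auto
qed

end
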